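(* Let $p\ge 4$ be an integer and let $T_1$ be the tree obtained from an induced path $a_1\text{-}a_2\text{-}\cdots\text{-}a_p$ by adding three new vertices $x,z,y$ and the edges $a_px$, $xz$ and $a_py$. For every integer $d\ge 1$ (and every such $T_1$) there exists a polynomial $f$ such that for every integer $t\ge 1$ the following holds: if $G$ is a paw-free graph that is $T_1$-free and does not contain $K_d(t)$ as a subgraph, then $\chi(G)\le f(t)$.
   Context: All graphs are finite and simple. $\chi(G)$ is the chromatic number of $G$. A graph is $H$-free if it has no induced subgraph isomorphic to $H$. The paw is the graph on four vertices consisting of a triangle together with one additional vertex adjacent to exactly one vertex of the triangle. For integers $d,t\ge1$, $K_d(t)$ denotes the complete $d$-partite graph in which each of the $d$ parts has exactly $t$ vertices; "contains $K_d(t)$ as a subgraph" means as a (not necessarily induced) subgraph. *)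

theory Defs
  imports "HOL-Computational_Algebra.Polynomial"
begin

definition simple_graph :: "'a set \<Rightarrow> ('a \<Rightarrow> 'a \<Rightarrow> bool) \<Rightarrow> bool" where
  "simple_graph V E \<longleftrightarrow> finite V \<and> (\<forall>u v. E u v \<longrightarrow> u \<in> V \<and> v \<in> V)
     \<and> (\<forall>u v. E u v \<longrightarrow> E v u) \<and> (\<forall>v. \<not> E v v)"

definition contains_induced ::
  "'a set \<Rightarrow> ('a \<Rightarrow> 'a \<Rightarrow> bool) \<Rightarrow> 'b set \<Rightarrow> ('b \<Rightarrow> 'b \<Rightarrow> bool) \<Rightarrow> bool" where
  "contains_induced V E VH EH \<longleftrightarrow> (\<exists>\<phi>. inj_on \<phi> VH \<and> \<phi> ` VH \<subseteq> V \<and>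
     (\<forall>u\<in>VH. \<forall>v\<in>VH. E (\<phi> u) (\<phi> v) \<longleftrightarrow> EH u v))"

definition H_free ::
  "'a set \<Rightarrow> ('a \<Rightarrow> 'a \<Rightarrow> bool) \<Rightarrow> 'b set \<Rightarrow> ('b \<Rightarrow> 'b \<Rightarrow> bool) \<Rightarrow> bool" where
  "H_free V E VH EH \<longleftrightarrow> \<not> contains_induced V E VH EH"

definition contains_subgraph ::
  "'a set \<Rightarrow> ('a \<Rightarrow> 'a \<Rightarrow> bool) \<Rightarrow> 'b set \<Rightarrow> ('b \<Rightarrow> 'b \<Rightarrow> bool) \<Rightarrow> bool" where
  "contains_subgraph V E VH EH \<longleftrightarrow> (\<exists>\<phi>. inj_on \<phi> VH \<and> \<phi> ` VH \<subseteq> V \<and>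
     (\<forall>u\<in>VH. \<forall>v\<in>VH. EH u v \<longrightarrow> E (\<phi> u) (\<phi> v)))"

definition proper_colouring :: "'a set \<Rightarrow> ('a \<Rightarrow> 'a \<Rightarrow> bool) \<Rightarrow> nat \<Rightarrow> ('a \<Rightarrow> nat) \<Rightarrow> bool" where
  "proper_colouring V E k c \<longleftrightarrow> (\<forall>v\<in>V. c v < k) \<and>
     (\<forall>u\<in>V. \<forall>v\<in>V. E u v \<longrightarrow> c u \<noteq> c v)"

definition chromatic_number :: "'a set \<Rightarrow> ('a \<Rightarrow> 'a \<Rightarrow> bool) \<Rightarrow> nat" where
  "chromatic_number V E = (LEAST k. \<exists>c. proper_colouring V E k c)"

definition paw_V :: "nat set" where "paw_V = {0,1,2,3}"
definition paw_E :: "nat \<Rightarrow> nat \<Rightarrow> bool" where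
  "paw_E u v \<longleftrightarrow> {u,v} \<in> {{0,1},{1,2},{0,2},{2,3}}"

text \<open>The tree T1 for parameter p: path a_i = i (1 \<le> i \<le> p), x = p+1, z = p+2,
  y = p+3, with edges a_i a_(i+1), a_p x, x z, a_p y.\<close>
definition T1_V :: "nat \<Rightarrow> nat set" where "T1_V p = {1..p+3}"
definition T1_E :: "nat \<Rightarrow> nat \<Rightarrow> nat \<Rightarrow> bool" where
  "T1_E p u v \<longleftrightarrow>
     (\<exists>i. 1 \<le> i \<and> i < p \<and> {u,v} = {i, i+1}) \<or>
     {u,v} = {p, p+1} \<or> {u,v} = {p+1, p+2} \<or> {u,v} = {p, p+3}"

definition Kdt_V :: "nat \<Rightarrow> nat \<Rightarrow> (nat \<times> nat) set" where
  "Kdt_V d t = {0..<d} \<times> {0..<t}"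
definition Kdt_E :: "(nat \<times> nat) \<Rightarrow> (nat \<times> nat) \<Rightarrow> bool" where
  "Kdt_E u v \<longleftrightarrow> fst u \<noteq> fst v"

end

theory Submission
  imports Defs
begin

(* Colour each component separately. A component containing a triangle is complete multipartite
   because G is paw-free (Olariu); one vertex from each part forms a clique, which has fewer than
   d t vertices because a clique on d t vertices contains K_d(t), and colouring by parts uses
   that many colours. A triangle-free component is coloured with p + 4 colours by Gyarfas' path
   argument: the neighbours of the end q_k of an induced path q_1 ... q_k inside the part D
   hanging from it form an independent set, and every component of the rest hangs from a path
   one vertex longer. When k = p, all of D lies at distance at least p from q_1, and T1-freeness
   makes every such BFS layer a disjoint union of complete bipartite graphs, so the parity of the
   layer together with the side inside the layer gives four colours. Altogether
   chi(G) <= p + 4 + d t. *)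

lemma T1_E_iff:
  assumes "u \<in> {1..p+3}" "v \<in> {1..p+3}"
  shows "T1_E p u v \<longleftrightarrow> (u \<le> p \<and> v \<le> p \<and> (v = Suc u \<or> u = Suc v)) \<or>
     {u, v} = {p, p+1} \<or> {u, v} = {p+1, p+2} \<or> {u, v} = {p, p+3}"
proof -
  have "(\<exists>i. 1 \<le> i \<and> i < p \<and> {u, v} = {i, i+1}) \<longleftrightarrow> u \<le> p \<and> v \<le> p \<and> (v = Suc u \<or> u = Suc v)"
  proof
    assume "\<exists>i. 1 \<le> i \<and> i < p \<and> {u, v} = {i, i+1}"
    then show "u \<le> p \<and> v \<le> p \<and> (v = Suc u \<or> u = Suc v)"
      by (auto simp: doubleton_eq_iff)
  next
    assume "u \<le> p \<and> v \<le> p \<and> (v = Suc u \<or> u = Suc v)"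
    then show "\<exists>i. 1 \<le> i \<and> i < p \<and> {u, v} = {i, i+1}"
      using assms by (intro exI[of _ "min u v"]) auto
  qed
  then show ?thesis unfolding T1_E_def by simp
qed

abbreviation colourable :: "'a set \<Rightarrow> ('a \<Rightarrow> 'a \<Rightarrow> bool) \<Rightarrow> nat \<Rightarrow> bool" where
  "colourable S E k \<equiv> \<exists>c. proper_colouring S E k c"

lemma colourable_mono: "colourable S E k \<Longrightarrow> k \<le> l \<Longrightarrow> colourable S E l"
  unfolding proper_colouring_def by (meson less_le_trans)

lemma colourable_subset: "colourable S E k \<Longrightarrow> T \<subseteq> S \<Longrightarrow> colourable T E k"
  unfolding proper_colouring_def by blast

lemma chromatic_number_le: "colourable V E k \<Longrightarrow> chromatic_number V E \<le> k"
  unfolding chromatic_number_def by (rule Least_le)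

lemma colourable_Un_independent:
  assumes "colourable T E k" and "\<forall>u\<in>S. \<forall>v\<in>S. \<not> E u v"
  shows "colourable (S \<union> T) E (Suc k)"
proof -
  obtain c where c: "proper_colouring T E k c" using assms(1) by blast
  have "proper_colouring (S \<union> T) E (Suc k) (\<lambda>v. if v \<in> S then k else c v)"
    unfolding proper_colouring_def
  proof (intro conjI ballI impI)
    fix u v assume "u \<in> S \<union> T" "v \<in> S \<union> T" "E u v"
    with c assms(2) show "(if u \<in> S then k else c u) \<noteq> (if v \<in> S then k else c v)"
      unfolding proper_colouring_def by (metis UnE less_irrefl)
  qed (use c in \<open>auto simp: proper_colouring_def\<close>)
  then show ?thesis by blast
qed

lemma colourable_quotient:
  assumes "equiv C R" "finite (C // R)" "\<And>u v. (u, v) \<in> R \<Longrightarrow> \<not> E u v"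
  shows "colourable C E (card (C // R))"
proof -
  obtain f where f: "bij_betw f (C // R) {0..<card (C // R)}"
    using ex_bij_betw_finite_nat[OF assms(2)] by blast
  have "proper_colouring C E (card (C // R)) (\<lambda>v. f (R `` {v}))"
    unfolding proper_colouring_def
  proof (intro conjI ballI impI)
    fix v assume "v \<in> C"
    then show "f (R `` {v}) < card (C // R)"
      using f quotientI[of v C R] unfolding bij_betw_def by auto
  next
    fix u v assume uv: "u \<in> C" "v \<in> C" "E u v"
    then have "R `` {u} \<noteq> R `` {v}"
      using eq_equiv_class_iff[OF assms(1) uv(1,2)] assms(3) by blast
    then show "f (R `` {u}) \<noteq> f (R `` {v})"
      using f quotientI[of u C R] quotientI[of v C R] uv unfolding bij_betw_def inj_on_def by blast
  qed
  then show ?thesis by blast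
qed

lemma image_upd_atLeastAtMost_Suc: "(q(Suc k := x)) ` {1..Suc k} = insert x (q ` {1..k})"
proof -
  have "{1..Suc k} = insert (Suc k) {1..k}" by auto
  moreover have "(q(Suc k := x)) ` {1..k} = q ` {1..k}" by (rule image_cong) auto
  ultimately show ?thesis by (simp only: image_insert fun_upd_same)
qed

locale fin_graph =
  fixes V :: "'a set" and E :: "'a \<Rightarrow> 'a \<Rightarrow> bool"
  assumes simple_graph: "simple_graph V E"
begin

lemma finite_V: "finite V"
  using simple_graph unfolding simple_graph_def by blast

lemma adj_sym: "E u v \<Longrightarrow> E v u"
  using simple_graph unfolding simple_graph_def by blast

lemma adj_irrefl: "\<not> E v v"
  using simple_graph unfolding simple_graph_def by blast

lemma adj_in_V: "E u v \<Longrightarrow> u \<in> V" "E u v \<Longrightarrow> v \<in> V"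
  using simple_graph unfolding simple_graph_def by blast+

definition connected_in :: "'a set \<Rightarrow> 'a \<Rightarrow> 'a \<Rightarrow> bool" where
  "connected_in S = (\<lambda>u v. u \<in> S \<and> v \<in> S \<and> E u v)\<^sup>*\<^sup>*"

lemma connected_in_refl [simp]: "connected_in S a a"
  unfolding connected_in_def by simp

lemma connected_in_snoc: "connected_in S a b \<Longrightarrow> b \<in> S \<Longrightarrow> c \<in> S \<Longrightarrow> E b c \<Longrightarrow> connected_in S a c"
  unfolding connected_in_def by (simp add: rtranclp.rtrancl_into_rtrancl)

lemma connected_in_trans: "connected_in S a b \<Longrightarrow> connected_in S b c \<Longrightarrow> connected_in S a c"
  unfolding connected_in_def by (rule rtranclp_trans)

lemma connected_in_induct [consumes 1, case_names base step]:
  assumes "connected_in S a b" and "P a"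
    and "\<And>u v. connected_in S a u \<Longrightarrow> u \<in> S \<Longrightarrow> v \<in> S \<Longrightarrow> E u v \<Longrightarrow> P u \<Longrightarrow> P v"
  shows "P b"
  using assms(1) unfolding connected_in_def
  by (induction rule: rtranclp_induct) (use assms(2,3) in \<open>auto simp: connected_in_def\<close>)

lemma connected_in_sym: "connected_in S a b \<Longrightarrow> connected_in S b a"
  unfolding connected_in_def
  by (induction rule: rtranclp_induct) (auto intro: converse_rtranclp_into_rtranclp adj_sym)

lemma connected_in_mono: "connected_in S a b \<Longrightarrow> S \<subseteq> T \<Longrightarrow> connected_in T a b"
  unfolding connected_in_def by (erule rtranclp_mono[THEN predicate2D, rotated]) auto

lemma connected_in_in: "connected_in S a b \<Longrightarrow> a \<in> S \<Longrightarrow> b \<in> S"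
  by (induction rule: connected_in_induct)

definition component_in :: "'a set \<Rightarrow> 'a \<Rightarrow> 'a set" where
  "component_in S v = {w. connected_in S v w}"

lemma mem_component_in: "v \<in> component_in S v"
  unfolding component_in_def by simp

lemma component_in_subset: "v \<in> S \<Longrightarrow> component_in S v \<subseteq> S"
  unfolding component_in_def using connected_in_in by blast

lemma component_in_eq:
  assumes "connected_in S u v" shows "component_in S u = component_in S v"
proof -
  have "connected_in S v u" using assms by (rule connected_in_sym)
  with assms show ?thesis
    unfolding component_in_def by (blast intro: connected_in_trans)
qed

lemma connected_in_component:
  "connected_in S a b \<Longrightarrow> connected_in (component_in S a) a b"
proof (induction rule: connected_in_induct)
  case (step u v)
  then have "u \<in> component_in S a" "v \<in> component_in S a"
    unfolding component_in_def using connected_in_snoc by blast+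
  with step show ?case using connected_in_snoc by blast
qed simp

lemma colourable_componentwise:
  assumes "\<forall>v\<in>S. colourable (component_in S v) E k"
  shows "colourable S E k"
proof -
  define c where "c v = (SOME c. proper_colouring (component_in S v) E k c)" for v
  have c: "proper_colouring (component_in S v) E k (c v)" if "v \<in> S" for v
    unfolding c_def using assms that by (metis someI_ex)
  have "proper_colouring S E k (\<lambda>v. c v v)"
    unfolding proper_colouring_def
  proof (intro conjI ballI impI)
    show "c v v < k" if "v \<in> S" for v
      using c[OF that] mem_component_in unfolding proper_colouring_def by blast
  next
    fix u v assume uv: "u \<in> S" "v \<in> S" "E u v"
    then have "component_in S u = component_in S v"
      by (intro component_in_eq connected_in_snoc[OF connected_in_refl])
    then have "c v = c u" "v \<in> component_in S u"
      unfolding c_def using mem_component_in by metis+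
    with c[OF uv(1)] mem_component_in uv(3) show "c u u \<noteq> c v v"
      unfolding proper_colouring_def by metis
  qed
  then show ?thesis by blast
qed

definition triangle_free :: "'a set \<Rightarrow> bool" where
  "triangle_free Y \<longleftrightarrow> (\<forall>a\<in>Y. \<forall>b\<in>Y. \<forall>c\<in>Y. E a b \<longrightarrow> E b c \<longrightarrow> \<not> E a c)"

lemma triangle_freeD: "triangle_free Y \<Longrightarrow> a \<in> Y \<Longrightarrow> b \<in> Y \<Longrightarrow> c \<in> Y \<Longrightarrow> E a b \<Longrightarrow> E b c \<Longrightarrow> \<not> E a c"
  unfolding triangle_free_def by blast

lemma triangle_free_subset: "triangle_free Y \<Longrightarrow> Z \<subseteq> Y \<Longrightarrow> triangle_free Z"
  unfolding triangle_free_def by blast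

definition clique :: "'a set \<Rightarrow> bool" where
  "clique K \<longleftrightarrow> K \<subseteq> V \<and> (\<forall>u\<in>K. \<forall>v\<in>K. u \<noteq> v \<longrightarrow> E u v)"

lemma clique_contains_subgraph:
  assumes "clique K" "card VH \<le> card K" "finite VH" "\<And>u v. EH u v \<Longrightarrow> u \<noteq> v"
  shows "contains_subgraph V E VH EH"
proof -
  have "finite K" using assms(1) finite_V unfolding clique_def by (blast intro: finite_subset)
  then obtain f where f: "f ` VH \<subseteq> K" "inj_on f VH"
    using card_le_inj[OF assms(3) _ assms(2)] by blast
  have "E (f u) (f v)" if "u \<in> VH" "v \<in> VH" "EH u v" for u v
  proof -
    have "f u \<noteq> f v" using inj_on_contraD[OF f(2) assms(4)[OF that(3)] that(1,2)] .
    moreover have "f u \<in> K" "f v \<in> K" using f(1) that(1,2) by blast+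
    ultimately show ?thesis using assms(1) unfolding clique_def by blast
  qed
  then show ?thesis
    using f assms(1) unfolding contains_subgraph_def clique_def by blast
qed

lemma clique_card_less:
  assumes "\<not> contains_subgraph V E (Kdt_V d t) Kdt_E" "clique K"
  shows "card K < d * t"
proof (rule ccontr)
  assume "\<not> card K < d * t"
  then have "card (Kdt_V d t) \<le> card K"
    by (simp add: Kdt_V_def card_cartesian_product)
  with assms(2) have "contains_subgraph V E (Kdt_V d t) Kdt_E"
    by (rule clique_contains_subgraph) (auto simp: Kdt_V_def Kdt_E_def)
  then show False using assms(1) by blast
qed

definition induced_path :: "nat \<Rightarrow> (nat \<Rightarrow> 'a) \<Rightarrow> bool" where
  "induced_path k q \<longleftrightarrow> q ` {1..k} \<subseteq> V \<and> inj_on q {1..k} \<and>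
     (\<forall>i\<in>{1..k}. \<forall>j\<in>{1..k}. E (q i) (q j) \<longleftrightarrow> j = Suc i \<or> i = Suc j)"

lemma induced_path_snoc:
  assumes path: "induced_path k q" and x: "x \<in> V" "x \<notin> q ` {1..k}"
    and x_adj: "\<And>i. i \<in> {1..k} \<Longrightarrow> E x (q i) \<longleftrightarrow> i = k"
  shows "induced_path (Suc k) (q(Suc k := x))"
  unfolding induced_path_def
proof (intro conjI ballI)
  let ?q = "q(Suc k := x)"
  have q_V: "q ` {1..k} \<subseteq> V" and q_inj: "inj_on q {1..k}"
    and q_adj: "\<And>i j. i \<in> {1..k} \<Longrightarrow> j \<in> {1..k} \<Longrightarrow> E (q i) (q j) \<longleftrightarrow> j = Suc i \<or> i = Suc j"
    using path unfolding induced_path_def by blast+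
  have upd: "?q i = q i" if "i \<in> {1..k}" for i
    using that by simp
  show "?q ` {1..Suc k} \<subseteq> V"
    unfolding image_upd_atLeastAtMost_Suc using q_V x(1) by blast
  have split: "{1..Suc k} = insert (Suc k) {1..k}"
    by auto
  have "inj_on ?q {1..k}"
    using q_inj by (simp only: inj_on_cong[OF upd])
  then show "inj_on ?q {1..Suc k}"
    unfolding split using x(2) image_cong[OF refl upd] by simp
  fix i j assume "i \<in> {1..Suc k}" "j \<in> {1..Suc k}"
  then consider "i = Suc k" "j = Suc k" | "i = Suc k" "j \<in> {1..k}" | "i \<in> {1..k}" "j = Suc k"
    | "i \<in> {1..k}" "j \<in> {1..k}"
    by force
  then show "E (?q i) (?q j) \<longleftrightarrow> j = Suc i \<or> i = Suc j"
  proof cases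
    case 1 then show ?thesis using adj_irrefl by simp
  next
    case 2 then show ?thesis using x_adj[of j] by (auto simp: upd)
  next
    case 3 then show ?thesis using x_adj[of i] adj_sym[of x "q i"] adj_sym[of "q i" x] by (auto simp: upd)
  next
    case 4 then show ?thesis using q_adj upd by simp
  qed
qed

lemma induced_path_connected:
  assumes "induced_path k q" "j \<in> {1..k}"
  shows "connected_in (q ` {1..k}) (q 1) (q j)"
  using assms(2)
proof (induction j)
  case (Suc j)
  show ?case
  proof (cases "j = 0")
    case False
    with Suc.prems have "j \<in> {1..k}" by simp
    moreover have "E (q j) (q (Suc j))"
      using assms(1) Suc.prems \<open>j \<in> {1..k}\<close> unfolding induced_path_def by blast
    ultimately show ?thesis
      using Suc connected_in_snoc Suc.prems by blast
  qed simp
qed simp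

lemma contains_induced_T1I:
  assumes "induced_path p a" and xyz_V: "x \<in> V" "y \<in> V" "z \<in> V"
    and x_path: "\<And>i. i \<in> {1..p} \<Longrightarrow> E x (a i) \<longleftrightarrow> i = p"
    and y_path: "\<And>i. i \<in> {1..p} \<Longrightarrow> E y (a i) \<longleftrightarrow> i = p"
    and z_path: "\<And>i. i \<in> {1..p} \<Longrightarrow> \<not> E z (a i)"
    and xyz: "E x z" "\<not> E x y" "\<not> E z y"
    and new: "x \<notin> a ` {1..p}" "y \<notin> a ` {1..p}" "z \<notin> a ` {1..p}" "x \<noteq> y" "x \<noteq> z" "y \<noteq> z"
  shows "contains_induced V E (T1_V p) (T1_E p)"
proof -
  have a_V: "a ` {1..p} \<subseteq> V" and inj: "inj_on a {1..p}"
    and path: "\<And>i j. i \<in> {1..p} \<Longrightarrow> j \<in> {1..p} \<Longrightarrow> E (a i) (a j) \<longleftrightarrow> j = Suc i \<or> i = Suc j"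
    using assms(1) unfolding induced_path_def by blast+
  define \<phi> where "\<phi> i = (if i \<le> p then a i else if i = p+1 then x else if i = p+2 then z else y)" for i
  have cases: "i \<in> {1..p} \<or> i = p+1 \<or> i = p+2 \<or> i = p+3" if "i \<in> T1_V p" for i
    using that unfolding T1_V_def by auto
  have "inj_on \<phi> (T1_V p)"
  proof (rule inj_onI)
    fix i j assume "i \<in> T1_V p" "j \<in> T1_V p" "\<phi> i = \<phi> j"
    with cases[of i] cases[of j] show "i = j"
      using inj_onD[OF inj] new by (auto simp: \<phi>_def)
  qed
  moreover have "\<phi> ` T1_V p \<subseteq> V"
    using cases a_V xyz_V by (fastforce simp: \<phi>_def)
  moreover have "E (\<phi> i) (\<phi> j) \<longleftrightarrow> T1_E p i j" if "i \<in> T1_V p" "j \<in> T1_V p" for i j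
  proof -
    have path': "\<And>i. i \<in> {1..p} \<Longrightarrow> E (a i) x \<longleftrightarrow> i = p" "\<And>i. i \<in> {1..p} \<Longrightarrow> E (a i) y \<longleftrightarrow> i = p"
      "\<And>i. i \<in> {1..p} \<Longrightarrow> \<not> E (a i) z" "E z x" "\<not> E y x" "\<not> E y z"
      using x_path y_path z_path xyz adj_sym by blast+
    from cases[OF that(1)] cases[OF that(2)] show ?thesis
      unfolding T1_E_iff[OF that[unfolded T1_V_def]]
      by (elim disjE) (auto simp: \<phi>_def path x_path y_path z_path path' xyz adj_irrefl doubleton_eq_iff)
  qed
  ultimately show ?thesis
    unfolding contains_induced_def by blast
qed

lemma contains_induced_pawI:
  assumes edges: "E v a" "E v b" "E a b" "E v c" "\<not> E c a" "\<not> E c b"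
  shows "contains_induced V E paw_V paw_E"
proof -
  define \<phi> where "\<phi> i = (if i = 0 then a else if i = 1 then b else if i = 2 then v else c)" for i :: nat
  have edges': "E a v" "E b v" "E b a" "E c v" "\<not> E a c" "\<not> E b c"
    using edges adj_sym by blast+
  have "a \<noteq> b" "a \<noteq> v" "b \<noteq> v" "c \<noteq> v" "c \<noteq> a" "c \<noteq> b"
    using edges edges' adj_irrefl by metis+
  then have "inj_on \<phi> paw_V"
    unfolding inj_on_def paw_V_def \<phi>_def by auto
  moreover have "\<phi> ` paw_V \<subseteq> V"
    unfolding paw_V_def \<phi>_def using edges adj_in_V by auto
  moreover have "\<forall>i\<in>paw_V. \<forall>j\<in>paw_V. E (\<phi> i) (\<phi> j) \<longleftrightarrow> paw_E i j"
    using edges edges' adj_irrefl unfolding paw_V_def paw_E_def \<phi>_def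
    by (auto simp: doubleton_eq_iff insert_commute)
  ultimately show ?thesis
    unfolding contains_induced_def by blast
qed

lemma component_attached:
  assumes conn: "\<forall>v\<in>D. connected_in (D \<union> {a}) a v" and "a \<notin> D"
    and v: "v \<in> D - {u. E a u}"
  shows "\<exists>x\<in>D. E a x \<and> (\<exists>u\<in>component_in (D - {u. E a u}) v. E x u)"
proof -
  let ?D2 = "D - {u. E a u}"
  have "connected_in (D \<union> {a}) a v" using conn v by blast
  then have "v \<in> ?D2 \<longrightarrow> (\<exists>x\<in>D. E a x \<and> (\<exists>u\<in>component_in ?D2 v. E x u))"
  proof (induction rule: connected_in_induct)
    case base then show ?case using \<open>a \<notin> D\<close> by blast
  next
    case (step w b)
    show ?case
    proof
      assume b: "b \<in> ?D2"
      consider "w = a" | "w \<in> D" "E a w" | "w \<in> ?D2"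
        using step.hyps(2) by blast
      then show "\<exists>x\<in>D. E a x \<and> (\<exists>u\<in>component_in ?D2 b. E x u)"
      proof cases
        case 1 then show ?thesis using b step.hyps(4) by blast
      next
        case 2 then show ?thesis using step.hyps(4) mem_component_in by blast
      next
        case 3
        then have "component_in ?D2 w = component_in ?D2 b"
          using b step.hyps(4) by (intro component_in_eq connected_in_snoc[OF connected_in_refl])
        then show ?thesis using step.IH 3 by simp
      qed
    qed
  qed
  then show ?thesis using v by blast
qed

lemma connected_in_component_edge:
  assumes "w \<in> component_in S v" "u \<in> component_in S v" "E x u"
  shows "connected_in (component_in S v \<union> {x}) x w"
proof -
  have "connected_in S v u" "connected_in S v w"
    using assms(1,2) unfolding component_in_def by blast+
  then have "connected_in S u w"
    using connected_in_sym connected_in_trans by blast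
  then have "connected_in (component_in S u) u w"
    by (rule connected_in_component)
  moreover have "component_in S u = component_in S v"
    using component_in_eq[OF \<open>connected_in S v u\<close>] by simp
  ultimately have "connected_in (component_in S v \<union> {x}) u w"
    using connected_in_mono by blast
  moreover have "connected_in (component_in S v \<union> {x}) x u"
    using assms(2,3) connected_in_snoc[OF connected_in_refl] by blast
  ultimately show ?thesis
    using connected_in_trans by blast
qed

definition hangs_from :: "nat \<Rightarrow> (nat \<Rightarrow> 'a) \<Rightarrow> 'a set \<Rightarrow> bool" where
  "hangs_from k q D \<longleftrightarrow> 1 \<le> k \<and> induced_path k q \<and> D \<subseteq> V \<and> D \<inter> q ` {1..k} = {} \<and>
     (\<forall>v\<in>D. \<forall>i\<in>{1..<k}. \<not> E v (q i)) \<and> (\<forall>v\<in>D. connected_in (D \<union> {q k}) (q k) v)"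

lemma hangs_from_extend:
  assumes hangs: "hangs_from k q D" and v: "v \<in> D - {u. E (q k) u}"
  obtains x where "x \<in> D" "E (q k) x"
    and "hangs_from (Suc k) (q(Suc k := x)) (component_in (D - {u. E (q k) u}) v)"
    and "(q(Suc k := x)) ` {1..Suc k} \<union> component_in (D - {u. E (q k) u}) v \<subseteq> q ` {1..k} \<union> D"
proof -
  let ?D2 = "D - {u. E (q k) u}"
  let ?K = "component_in ?D2 v"
  have k: "1 \<le> k" and path: "induced_path k q" and D: "D \<subseteq> V" "D \<inter> q ` {1..k} = {}"
    and anti: "\<forall>v\<in>D. \<forall>i\<in>{1..<k}. \<not> E v (q i)" and conn: "\<forall>v\<in>D. connected_in (D \<union> {q k}) (q k) v"
    using hangs unfolding hangs_from_def by blast+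
  have "q k \<notin> D"
    using D(2) k by auto
  then obtain x u where x: "x \<in> D" "E (q k) x" and u: "u \<in> ?K" "E x u"
    using component_attached[OF conn _ v] by blast
  let ?q = "q(Suc k := x)"
  have K: "?K \<subseteq> ?D2"
    by (rule component_in_subset[OF v])
  have "induced_path (Suc k) ?q"
  proof (rule induced_path_snoc[OF path])
    show "x \<in> V" "x \<notin> q ` {1..k}"
      using x D by blast+
    show "E x (q i) \<longleftrightarrow> i = k" if "i \<in> {1..k}" for i
    proof (cases "i = k")
      case False
      with that have "i \<in> {1..<k}" by simp
      then show ?thesis using anti x(1) False by blast
    qed (use x(2) adj_sym in blast)
  qed
  moreover have "?K \<inter> ?q ` {1..Suc k} = {}"
    unfolding image_upd_atLeastAtMost_Suc using K x(2) D(2) by blast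
  moreover have "\<not> E w (?q i)" if "w \<in> ?K" "i \<in> {1..<Suc k}" for w i
  proof (cases "i = k")
    case True
    then show ?thesis using that(1) K adj_sym by auto
  next
    case False
    with that have "i \<in> {1..<k}" by simp
    then show ?thesis using anti that(1) K by auto
  qed
  moreover have "connected_in (?K \<union> {?q (Suc k)}) (?q (Suc k)) w" if "w \<in> ?K" for w
    using connected_in_component_edge[OF that u] by simp
  ultimately have "hangs_from (Suc k) ?q ?K"
    unfolding hangs_from_def using K D(1) by auto
  moreover have "?q ` {1..Suc k} \<union> ?K \<subseteq> q ` {1..k} \<union> D"
    unfolding image_upd_atLeastAtMost_Suc using x(1) K by blast
  ultimately show ?thesis
    using that x by blast
qed

lemma complete_multipartite_colourable:
  assumes "C \<subseteq> V"
    and nonadj_trans: "\<And>u v w. u \<in> C \<Longrightarrow> v \<in> C \<Longrightarrow> w \<in> C \<Longrightarrow> \<not> E u v \<Longrightarrow> \<not> E v w \<Longrightarrow> \<not> E u w"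
  obtains K where "clique K" "colourable C E (card K)"
proof -
  define R where "R = {(u, v). u \<in> C \<and> v \<in> C \<and> \<not> E u v}"
  have R: "R \<subseteq> C \<times> C"
    unfolding R_def by auto
  moreover have "refl_on C R"
    unfolding R_def refl_on_def using adj_irrefl by auto
  moreover have "sym R"
    unfolding R_def sym_def by (auto dest: adj_sym)
  moreover have "trans R"
    unfolding R_def trans_def using nonadj_trans by blast
  ultimately have equiv: "equiv C R"
    by (rule equivI)
  let ?P = "C // R"
  have class_eq_iff: "S = S' \<longleftrightarrow> u \<in> C \<and> v \<in> C \<and> \<not> E u v"
    if "S \<in> ?P" "S' \<in> ?P" "u \<in> S" "v \<in> S'" for S S' u v
    using quotient_eq_iff[OF equiv that] unfolding R_def by blast
  have fin: "finite ?P"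
    by (rule finite_quotient[OF finite_subset[OF assms(1) finite_V] R])
  define rep :: "'a set \<Rightarrow> 'a" where "rep S = (SOME x. x \<in> S)" for S
  have rep: "rep S \<in> S" if "S \<in> ?P" for S
    unfolding rep_def using in_quotient_imp_non_empty[OF equiv that] by (simp add: some_in_eq)
  have "clique (rep ` ?P)"
    unfolding clique_def
  proof (intro conjI ballI impI)
    show "rep ` ?P \<subseteq> V"
      using rep Union_quotient[OF equiv] assms(1) by blast
    fix x y assume "x \<in> rep ` ?P" "y \<in> rep ` ?P" "x \<noteq> y"
    then obtain S S' where "S \<in> ?P" "S' \<in> ?P" "x = rep S" "y = rep S'"
      by blast
    with \<open>x \<noteq> y\<close> rep class_eq_iff[of S S' x y] show "E x y"
      using Union_quotient[OF equiv] by blast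
  qed
  moreover have "card (rep ` ?P) = card ?P"
  proof (rule card_image, rule inj_onI)
    fix S S' assume S: "S \<in> ?P" "S' \<in> ?P" and "rep S = rep S'"
    then have "rep S \<in> S" "rep S \<in> S'"
      using rep by metis+
    moreover have "rep S \<in> C"
      using \<open>rep S \<in> S\<close> S(1) Union_quotient[OF equiv] by blast
    ultimately show "S = S'"
      using class_eq_iff[OF S] adj_irrefl by blast
  qed
  moreover have "colourable C E (card ?P)"
    by (rule colourable_quotient[OF equiv fin]) (simp add: R_def)
  ultimately show ?thesis
    using that by fastforce
qed

end

locale bfs = fin_graph +
  fixes X :: "'a set" and r :: 'a
  assumes X_subset: "X \<subseteq> V" and root_in: "r \<in> X"
begin

fun ball :: "nat \<Rightarrow> 'a set" where
  "ball 0 = {r}"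
| "ball (Suc n) = ball n \<union> {v \<in> X. \<exists>u\<in>ball n. E u v}"

abbreviation reached :: "'a \<Rightarrow> bool" where
  "reached v \<equiv> connected_in X r v"

definition layer :: "'a \<Rightarrow> nat" where
  "layer v = (LEAST n. v \<in> ball n)"

lemma ball_subset: "ball n \<subseteq> X"
  by (induction n) (use root_in in auto)

lemma reached_iff_ball: "reached v \<longleftrightarrow> (\<exists>n. v \<in> ball n)"
proof
  assume "reached v"
  then show "\<exists>n. v \<in> ball n"
  proof (induction rule: connected_in_induct)
    case (step u v)
    then obtain n where "u \<in> ball n" by blast
    with step.hyps(3,4) have "v \<in> ball (Suc n)" by auto
    then show ?case by blast
  qed (use ball.simps(1) in blast)
next
  assume "\<exists>n. v \<in> ball n"
  then obtain n where "v \<in> ball n" ..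
  then show "reached v"
  proof (induction n arbitrary: v)
    case (Suc n)
    show ?case
    proof (cases "v \<in> ball n")
      case False
      with Suc.prems obtain u where "u \<in> ball n" "v \<in> X" "E u v" by auto
      with Suc.IH ball_subset show ?thesis by (blast intro: connected_in_snoc)
    qed (rule Suc.IH)
  qed simp
qed

lemma reached_in_X: "reached v \<Longrightarrow> v \<in> X"
  using connected_in_in root_in by blast

lemma layer_ball: "reached v \<Longrightarrow> v \<in> ball (layer v)"
  unfolding layer_def reached_iff_ball by (rule LeastI_ex)

lemma layer_le: "v \<in> ball n \<Longrightarrow> layer v \<le> n"
  unfolding layer_def by (rule Least_le)

lemma layer_edge:
  assumes "reached u" "reached v" "E u v"
  shows "layer v \<le> Suc (layer u)"
proof -
  have "v \<in> ball (Suc (layer u))"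
    using layer_ball[OF assms(1)] reached_in_X[OF assms(2)] assms(3) by auto
  then show ?thesis by (rule layer_le)
qed

lemma layer_gap_nonadj: "reached u \<Longrightarrow> reached v \<Longrightarrow> layer u + 2 \<le> layer v \<Longrightarrow> \<not> E u v"
  using layer_edge by fastforce

lemma layer_pred:
  assumes "reached v" "layer v = Suc m"
  obtains u where "reached u" "layer u = m" "E u v"
proof -
  have "v \<in> ball (Suc m)" using layer_ball[OF assms(1)] assms(2) by simp
  moreover have "v \<notin> ball m" using layer_le assms(2) by fastforce
  ultimately obtain u where u: "u \<in> ball m" "E u v" by auto
  then have "reached u" using reached_iff_ball by blast
  moreover have "layer u = m"
    using layer_le[OF u(1)] layer_edge[OF \<open>reached u\<close> assms(1) u(2)] assms(2) by simp
  ultimately show ?thesis using that u(2) by blast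
qed

definition geodesic :: "nat \<Rightarrow> (nat \<Rightarrow> 'a) \<Rightarrow> bool" where
  "geodesic n w \<longleftrightarrow> (\<forall>j\<le>n. reached (w j) \<and> layer (w j) = n - j) \<and> (\<forall>j<n. E (w j) (w (Suc j)))"

lemma geodesic_exists:
  assumes "reached v"
  obtains w where "w 0 = v" "geodesic (layer v) w"
proof -
  have "\<exists>w. w 0 = v \<and> geodesic n w" if "reached v" "layer v = n" for n
    using that
  proof (induction n arbitrary: v)
    case 0
    then show ?case unfolding geodesic_def by (intro exI[of _ "\<lambda>_. v"]) simp
  next
    case (Suc n)
    obtain u where u: "reached u" "layer u = n" "E u v"
      using layer_pred[OF Suc.prems] .
    obtain w where w: "w 0 = u" "geodesic n w"
      using Suc.IH[OF u(1,2)] by blast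
    have "geodesic (Suc n) (case_nat v w)"
      unfolding geodesic_def
    proof (rule conjI; intro allI impI)
      fix j assume "j \<le> Suc n"
      then show "reached (case_nat v w j) \<and> layer (case_nat v w j) = Suc n - j"
        using Suc.prems w(2) unfolding geodesic_def by (cases j) auto
    next
      fix j assume "j < Suc n"
      then show "E (case_nat v w j) (case_nat v w (Suc j))"
        using u(3) adj_sym w unfolding geodesic_def by (cases j) auto
    qed
    then show ?case by (intro exI[of _ "case_nat v w"]) simp
  qed
  then show ?thesis using that assms by blast
qed

lemma geodesic_adj_iff:
  assumes w: "geodesic m w" and "s \<le> m" "t \<le> m"
  shows "E (w s) (w t) \<longleftrightarrow> t = Suc s \<or> s = Suc t"
proof
  assume e: "E (w s) (w t)"
  then have "layer (w t) \<le> Suc (layer (w s))" "layer (w s) \<le> Suc (layer (w t))"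
    using w assms(2,3) layer_edge adj_sym unfolding geodesic_def by blast+
  moreover have "s \<noteq> t" using e adj_irrefl by blast
  ultimately show "t = Suc s \<or> s = Suc t"
    using w assms(2,3) unfolding geodesic_def by auto
next
  assume "t = Suc s \<or> s = Suc t"
  then show "E (w s) (w t)"
    using w assms(2,3) adj_sym unfolding geodesic_def by auto
qed

lemma induced_path_geodesic:
  assumes w: "geodesic m w" and k: "k \<le> Suc m"
  shows "induced_path k (\<lambda>i. w (k - i))"
  unfolding induced_path_def
proof (intro conjI ballI)
  have below: "k - i \<le> m" if "i \<in> {1..k}" for i
    using that k by auto
  have w_layer: "reached (w (k - i))" "layer (w (k - i)) = m - (k - i)" if "i \<in> {1..k}" for i
    using w below[OF that] unfolding geodesic_def by blast+
  show "(\<lambda>i. w (k - i)) ` {1..k} \<subseteq> V"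
    using w_layer(1) reached_in_X X_subset by blast
  show "inj_on (\<lambda>i. w (k - i)) {1..k}"
  proof (rule inj_onI)
    fix i j assume ij: "i \<in> {1..k}" "j \<in> {1..k}" "w (k - i) = w (k - j)"
    then have "m - (k - i) = m - (k - j)"
      using w_layer(2)[OF ij(1)] w_layer(2)[OF ij(2)] by simp
    with ij(1,2) below[OF ij(1)] below[OF ij(2)] show "i = j"
      by auto
  qed
  fix i j assume ij: "i \<in> {1..k}" "j \<in> {1..k}"
  have "E (w (k - i)) (w (k - j)) \<longleftrightarrow> k - j = Suc (k - i) \<or> k - i = Suc (k - j)"
    by (rule geodesic_adj_iff[OF w below[OF ij(1)] below[OF ij(2)]])
  also have "\<dots> \<longleftrightarrow> j = Suc i \<or> i = Suc j"
    using ij by auto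
  finally show "E (w (k - i)) (w (k - j)) \<longleftrightarrow> j = Suc i \<or> i = Suc j" .
qed

lemma ball_hanging_path:
  assumes X: "X = q ` {1..k} \<union> D" and r: "r = q 1" and path: "induced_path k q"
    and anti: "\<forall>v\<in>D. \<forall>i\<in>{1..<k}. \<not> E v (q i)"
  shows "n < k \<Longrightarrow> ball n \<subseteq> q ` {1..Suc n}"
proof (induction n)
  case (Suc n)
  have IH: "ball n \<subseteq> q ` {1..Suc n}"
    using Suc by simp
  have step: "v \<in> q ` {1..Suc (Suc n)}" if uv: "v \<in> X" "u \<in> q ` {1..Suc n}" "E u v" for u v
  proof -
    obtain i where i: "i \<in> {1..Suc n}" "u = q i"
      using uv(2) by blast
    have "v \<notin> D"
      using anti i Suc.prems uv(3) adj_sym by fastforce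
    then obtain j where j: "j \<in> {1..k}" "v = q j"
      using uv(1) X by blast
    then have "j = Suc i \<or> i = Suc j"
      using path i uv(3) Suc.prems unfolding induced_path_def by auto
    then show ?thesis
      using i j by auto
  qed
  show ?case
  proof
    fix v assume "v \<in> ball (Suc n)"
    then consider "v \<in> ball n" | u where "u \<in> ball n" "v \<in> X" "E u v"
      by auto
    then show "v \<in> q ` {1..Suc (Suc n)}"
    proof cases
      case 1 then show ?thesis using IH by auto
    next
      case 2 then show ?thesis using IH step by blast
    qed
  qed
qed (unfold ball.simps(1), use r in simp)

end

locale T1_free_graph = fin_graph +
  fixes p :: nat
  assumes p_ge: "2 \<le> p" and T1_free: "\<not> contains_induced V E (T1_V p) (T1_E p)"

locale T1_free_bfs = bfs + T1_free_graph
begin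

text \<open>The path of \<open>T1\<close> is the geodesic read backwards, \<open>a i = w (p - i)\<close>; the layers keep
  \<open>x, y, z\<close> away from all of it except \<open>w 0\<close> and \<open>w 1\<close>.\<close>

lemma no_fork:
  assumes w: "geodesic m w" and m: "p - 1 \<le> m" "1 \<le> m"
    and reached: "reached x" "reached y" "reached z"
    and deep: "m \<le> layer x" "m \<le> layer y" "m \<le> layer z"
    and adj: "E (w 0) x" "E (w 0) y" "E x z"
    and nonadj: "\<not> E x y" "\<not> E z y" "\<not> E z (w 0)" "\<not> E x (w 1)" "\<not> E y (w 1)" "\<not> E z (w 1)"
    and "x \<noteq> y"
  shows False
proof -
  define a where "a i = w (p - i)" for i
  have path: "induced_path p a"
    using induced_path_geodesic[OF w] m unfolding a_def by simp
  have a_p: "a p = w 0"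
    unfolding a_def by simp
  have a_reached: "reached (a i)" and a_layer: "layer (a i) = m - (p - i)" if "i \<in> {1..p}" for i
    using w that m unfolding a_def geodesic_def by auto
  have xyz_V: "x \<in> V" "y \<in> V" "z \<in> V"
    using reached reached_in_X X_subset by blast+
  have far: "\<not> E v (a i)"
    if "reached v" "m \<le> layer v" "\<not> E v (w 1)" "i \<in> {1..p}" "i \<noteq> p" for v i
  proof (cases "p - i = 1")
    case False
    then have "layer (a i) + 2 \<le> layer v"
      using a_layer that(2,4,5) m by auto
    then show ?thesis
      using layer_gap_nonadj[OF a_reached[OF that(4)] that(1)] adj_sym by blast
  qed (use that(3) a_def in simp)
  have x_a: "E x (a i) \<longleftrightarrow> i = p" and y_a: "E y (a i) \<longleftrightarrow> i = p" if "i \<in> {1..p}" for i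
    using far[OF reached(1) deep(1) nonadj(4) that] far[OF reached(2) deep(2) nonadj(5) that]
      adj(1,2) adj_sym a_p by auto
  have z_a: "\<not> E z (a i)" if "i \<in> {1..p}" for i
    using far[OF reached(3) deep(3) nonadj(6) that] nonadj(3) a_p by (cases "i = p") auto
  have fresh: "v \<notin> a ` {1..p}" if "reached v" "m \<le> layer v" "v \<noteq> w 0" for v
  proof
    assume "v \<in> a ` {1..p}"
    then obtain i where "i \<in> {1..p}" "v = a i" by blast
    moreover have "layer (a i) < m" if "i \<in> {1..p}" "i \<noteq> p"
      using a_layer that m by auto
    ultimately show False using that a_p by fastforce
  qed
  have "x \<noteq> w 0" "y \<noteq> w 0" "z \<noteq> w 0"
    using adj adj_irrefl nonadj(6) geodesic_adj_iff[OF w, of 0 1] m by auto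
  then have "x \<notin> a ` {1..p}" "y \<notin> a ` {1..p}" "z \<notin> a ` {1..p}"
    using fresh reached deep by blast+
  moreover have "x \<noteq> z" "y \<noteq> z"
    using adj(3) nonadj(1) adj_irrefl by auto
  ultimately have "contains_induced V E (T1_V p) (T1_E p)"
    using \<open>x \<noteq> y\<close> by (intro contains_induced_T1I[OF path xyz_V x_a y_a z_a adj(3) nonadj(1,2)])
  then show False using T1_free by blast
qed

end

locale triangle_free_bfs = T1_free_bfs +
  assumes triangle_free_X: "triangle_free X"
begin

lemma no_triangle: "a \<in> X \<Longrightarrow> b \<in> X \<Longrightarrow> c \<in> X \<Longrightarrow> E a b \<Longrightarrow> E b c \<Longrightarrow> \<not> E a c"
  using triangle_freeD[OF triangle_free_X] .

lemma layer_twin: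
  assumes n: "p \<le> n"
    and reached: "reached c" "reached x" "reached y" "reached z"
    and layer: "layer c = n" "layer x = n" "layer y = n" "layer z = n"
    and adj: "E c x" "E x z" "E c y" and "z \<noteq> c"
  shows "E z y"
proof (rule ccontr)
  assume zy: "\<not> E z y"
  have in_X: "c \<in> X" "x \<in> X" "y \<in> X" "z \<in> X"
    using reached reached_in_X by blast+
  obtain w where w: "w 0 = c" "geodesic n w"
    using geodesic_exists[OF reached(1)] layer(1) by metis
  have w1: "reached (w 1)" "layer (w 1) = n - 1" "E c (w 1)"
    using w p_ge n unfolding geodesic_def by auto
  have "x \<noteq> y" using zy adj(2) adj_sym by blast
  \<comment> \<open>The fork of \<open>T1\<close> sits at \<open>c\<close> with leaves \<open>x, y\<close> and \<open>z\<close> below \<open>x\<close>, or, if \<open>z\<close> sees the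
     predecessor \<open>w 1\<close> of \<open>c\<close>, at \<open>w 1\<close> with leaves \<open>c, z\<close> and \<open>y\<close> below \<open>c\<close>.\<close>
  show False
  proof (cases "E z (w 1)")
    case False
    have "\<not> E x y" "\<not> E z c" "\<not> E x (w 1)" "\<not> E y (w 1)"
      using no_triangle in_X adj w1 reached_in_X adj_sym by metis+
    moreover have "p - 1 \<le> n" "1 \<le> n"
      using n p_ge by auto
    ultimately show False
      using no_fork[OF w(2) _ _ reached(2,3,4)] layer adj zy w(1) False \<open>x \<noteq> y\<close> by simp
  next
    case True
    define u where "u = w 1"
    obtain w' where w': "w' 0 = u" "geodesic (n - 1) w'"
      using geodesic_exists[OF w1(1)] w1(2) unfolding u_def by metis
    have w'1: "reached (w' 1)" "layer (w' 1) = n - 2"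
      using w' p_ge n unfolding geodesic_def by auto
    have "\<not> E c z" "\<not> E y u"
      using no_triangle in_X w1 True adj reached_in_X adj_sym unfolding u_def by metis+
    moreover have "\<not> E v (w' 1)" if "reached v" "layer v = n" for v
      using layer_gap_nonadj[OF w'1(1) that(1)] w'1(2) that(2) n p_ge adj_sym by fastforce
    ultimately show False
      using no_fork[OF w'(2) _ _ reached(1,4,3)] n p_ge layer reached adj zy w'(1) w1 True
        \<open>z \<noteq> c\<close> adj_sym unfolding u_def by fastforce
  qed
qed

definition layer_nbrs :: "'a \<Rightarrow> 'a set" where
  "layer_nbrs v = {u. reached u \<and> layer u = layer v \<and> E v u}"

definition layer_nbrs2 :: "'a \<Rightarrow> 'a set" where
  "layer_nbrs2 v = {u. reached u \<and> layer u = layer v \<and> (\<exists>x\<in>layer_nbrs v. E x u)}"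

lemma layer_nbrs2_eq:
  assumes "reached v" "reached w" "p \<le> layer v" "layer w = layer v" "E v w"
  shows "layer_nbrs2 v = layer_nbrs w"
proof
  show "layer_nbrs2 v \<subseteq> layer_nbrs w"
  proof
    fix z assume "z \<in> layer_nbrs2 v"
    then obtain x where z: "reached z" "layer z = layer v" and x: "x \<in> layer_nbrs v" "E x z"
      unfolding layer_nbrs2_def by blast
    have x': "reached x" "layer x = layer v" "E v x"
      using x(1) unfolding layer_nbrs_def by auto
    have "E w z"
    proof (cases "z = v")
      case False
      have "E z w"
        by (rule layer_twin[OF assms(3) assms(1) x'(1) assms(2) z(1) refl x'(2) assms(4) z(2)
              x'(3) x(2) assms(5) False])
      then show ?thesis by (rule adj_sym)
    qed (use assms(5) adj_sym in blast)
    then show "z \<in> layer_nbrs w"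
      using z assms(4) unfolding layer_nbrs_def by simp
  qed
next
  show "layer_nbrs w \<subseteq> layer_nbrs2 v"
    using assms unfolding layer_nbrs_def layer_nbrs2_def by auto
qed

text \<open>For an edge \<open>vw\<close> in a deep layer, \<open>layer_nbrs2 v = layer_nbrs w\<close> and vice versa, so \<open>v\<close>
  and \<open>w\<close> choose the same element of \<open>layer_nbrs v \<union> layer_nbrs w\<close>, and it lies in exactly one
  of these two disjoint sets.\<close>

definition side :: "'a \<Rightarrow> bool" where
  "side v \<longleftrightarrow> (SOME u. u \<in> layer_nbrs v \<union> layer_nbrs2 v) \<in> layer_nbrs v"

lemma side_adj:
  assumes "reached v" "reached w" "p \<le> layer v" "layer w = layer v" "E v w"
  shows "side v \<noteq> side w"
proof -
  have w_side: "reached v" "reached w" "p \<le> layer w" "layer v = layer w" "E w v"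
    using assms adj_sym by auto
  let ?U = "layer_nbrs v \<union> layer_nbrs w"
  have U: "layer_nbrs v \<union> layer_nbrs2 v = ?U" "layer_nbrs w \<union> layer_nbrs2 w = ?U"
    using layer_nbrs2_eq[OF assms] layer_nbrs2_eq[OF w_side(2,1,3-5)] by auto
  have "w \<in> ?U"
    using assms unfolding layer_nbrs_def by simp
  then have "(SOME u. u \<in> ?U) \<in> ?U"
    by (rule someI)
  moreover have "layer_nbrs v \<inter> layer_nbrs w = {}"
    using no_triangle reached_in_X assms(1,2,5) unfolding layer_nbrs_def by blast
  ultimately show ?thesis
    unfolding side_def U by blast
qed

lemma deep_layers_colourable: "colourable {v. reached v \<and> p \<le> layer v} E 4"
proof -
  define col where "col v = 2 * (layer v mod 2) + (if side v then 1 else 0)" for v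
  have "proper_colouring {v. reached v \<and> p \<le> layer v} E 4 col"
    unfolding proper_colouring_def
  proof (intro conjI ballI impI)
    show "col v < 4" for v
      unfolding col_def by (cases "layer v mod 2 = 0") auto
  next
    fix u v assume u: "u \<in> {v. reached v \<and> p \<le> layer v}" and v: "v \<in> {v. reached v \<and> p \<le> layer v}"
      and "E u v"
    show "col u \<noteq> col v"
    proof (cases "layer v = layer u")
      case True
      then show ?thesis
        using side_adj[of u v] u v \<open>E u v\<close> unfolding col_def by auto
    next
      case False
      then have "layer v = Suc (layer u) \<or> layer u = Suc (layer v)"
        using layer_edge[of u v] layer_edge[of v u] u v \<open>E u v\<close> adj_sym by force
      then have "layer u mod 2 \<noteq> layer v mod 2"
        by presburger
      then show ?thesis
        unfolding col_def by auto
    qed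
  qed
  then show ?thesis by blast
qed

end

context T1_free_graph
begin

lemma colourable_far_from_path:
  assumes hangs: "hangs_from p q D" and tf: "triangle_free (q ` {1..p} \<union> D)"
  shows "colourable D E 4"
proof -
  let ?X = "q ` {1..p} \<union> D"
  have path: "induced_path p q" and D: "D \<subseteq> V" "D \<inter> q ` {1..p} = {}"
    and anti: "\<forall>v\<in>D. \<forall>i\<in>{1..<p}. \<not> E v (q i)" and conn: "\<forall>v\<in>D. connected_in (D \<union> {q p}) (q p) v"
    using hangs unfolding hangs_from_def by blast+
  have ends: "1 \<in> {1..p}" "p \<in> {1..p}"
    using p_ge by auto
  interpret triangle_free_bfs V E ?X "q 1" p
    by unfold_locales (use path D(1) ends tf in \<open>auto simp: induced_path_def\<close>)
  note ball_path = ball_hanging_path[OF refl refl path anti]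
  have reached_D: "reached v" if "v \<in> D" for v
  proof -
    have "connected_in ?X (q 1) (q p)"
      using induced_path_connected[OF path ends(2)] connected_in_mono by blast
    moreover have "connected_in ?X (q p) v"
      using conn that connected_in_mono[of "D \<union> {q p}" "q p" v ?X] ends(2) by blast
    ultimately show ?thesis
      by (rule connected_in_trans)
  qed
  have "p \<le> layer v" if "v \<in> D" for v
  proof (rule ccontr)
    assume "\<not> p \<le> layer v"
    then have "layer v < p" by simp
    then have "v \<in> q ` {1..Suc (layer v)}"
      using ball_path layer_ball[OF reached_D[OF that]] by blast
    moreover have "{1..Suc (layer v)} \<subseteq> {1..p}"
      using \<open>layer v < p\<close> by auto
    ultimately have "v \<in> q ` {1..p}"
      by blast
    then show False
      using D(2) that by blast
  qed
  then have "D \<subseteq> {v. reached v \<and> p \<le> layer v}"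
    using reached_D by blast
  then show ?thesis
    using deep_layers_colourable colourable_subset by blast
qed

lemma colourable_hanging:
  assumes "hangs_from k q D" "k \<le> p" "triangle_free (q ` {1..k} \<union> D)"
  shows "colourable D E (p - k + 4)"
  using assms
proof (induction "p - k" arbitrary: k q D)
  case 0
  then have "k = p" by simp
  with 0 show ?case
    using colourable_far_from_path by simp
next
  case (Suc j)
  let ?D1 = "{u \<in> D. E (q k) u}" and ?D2 = "D - {u. E (q k) u}"
  have "colourable ?D2 E (p - Suc k + 4)"
  proof (rule colourable_componentwise, rule ballI)
    fix v assume "v \<in> ?D2"
    then obtain x where "x \<in> D"
      and hangs: "hangs_from (Suc k) (q(Suc k := x)) (component_in ?D2 v)"
      and sub: "(q(Suc k := x)) ` {1..Suc k} \<union> component_in ?D2 v \<subseteq> q ` {1..k} \<union> D"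
      using hangs_from_extend[OF Suc.prems(1)] by blast
    have "j = p - Suc k" "Suc k \<le> p"
      using Suc.hyps(2) by auto
    then show "colourable (component_in ?D2 v) E (p - Suc k + 4)"
      using Suc.hyps(1) hangs triangle_free_subset[OF Suc.prems(3) sub] by blast
  qed
  moreover have "\<forall>u\<in>?D1. \<forall>w\<in>?D1. \<not> E u w"
  proof -
    have "q k \<in> q ` {1..k}"
      using Suc.prems(1) unfolding hangs_from_def by auto
    then show ?thesis
      using triangle_freeD[OF Suc.prems(3)] by blast
  qed
  ultimately have "colourable (?D1 \<union> ?D2) E (Suc (p - Suc k + 4))"
    by (rule colourable_Un_independent)
  moreover have "?D1 \<union> ?D2 = D" "Suc (p - Suc k + 4) = p - k + 4"
    using Suc.hyps(2) by auto
  ultimately show ?case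
    by (simp only:)
qed

lemma triangle_free_component_colourable:
  assumes "v \<in> V" "triangle_free (component_in V v)"
  shows "colourable (component_in V v) E (p + 4)"
proof -
  let ?C = "component_in V v" and ?q = "\<lambda>_::nat. v"
  have C: "?C = {v} \<union> (?C - {v})" "?C - {v} \<union> {v} = ?C"
    using mem_component_in by blast+
  have "induced_path 1 ?q"
    unfolding induced_path_def using assms(1) adj_irrefl by auto
  moreover have "connected_in (?C - {v} \<union> {v}) v w" if "w \<in> ?C" for w
  proof -
    have "connected_in V v w"
      using that unfolding component_in_def by blast
    then show ?thesis
      unfolding C(2) by (rule connected_in_component)
  qed
  ultimately have hangs: "hangs_from 1 ?q (?C - {v})"
    unfolding hangs_from_def using component_in_subset[OF assms(1)] by auto
  have tf: "triangle_free (?q ` {1..1} \<union> (?C - {v}))"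
    using assms(2) C by simp
  have "colourable (?C - {v}) E (p - 1 + 4)"
    by (rule colourable_hanging[OF hangs _ tf]) (use p_ge in simp)
  then have "colourable ({v} \<union> (?C - {v})) E (Suc (p - 1 + 4))"
    by (rule colourable_Un_independent) (use adj_irrefl in blast)
  moreover have "Suc (p - 1 + 4) = p + 4"
    using p_ge by simp
  ultimately show ?thesis
    unfolding C(1)[symmetric] by (simp only:)
qed

end

locale paw_free_graph = fin_graph +
  assumes paw_free: "\<not> contains_induced V E paw_V paw_E"
begin

lemma no_paw: "E v a \<Longrightarrow> E v b \<Longrightarrow> E a b \<Longrightarrow> E v c \<Longrightarrow> \<not> E c a \<Longrightarrow> \<not> E c b \<Longrightarrow> False"
  using contains_induced_pawI paw_free by blast

definition in_triangle :: "'a \<Rightarrow> bool" where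
  "in_triangle v \<longleftrightarrow> (\<exists>a b. E v a \<and> E v b \<and> E a b)"

lemma common_nbr:
  assumes "in_triangle v" "E v w"
  obtains s where "E v s" "E w s"
proof -
  obtain a b where ab: "E v a" "E v b" "E a b"
    using assms(1) unfolding in_triangle_def by blast
  have "E w a \<or> E w b \<or> w = a \<or> w = b"
    using no_paw[OF ab assms(2)] adj_sym by blast
  then show ?thesis
    using that ab adj_sym by blast
qed

lemma in_triangle_connected: "connected_in S a v \<Longrightarrow> in_triangle a \<Longrightarrow> in_triangle v"
proof (induction rule: connected_in_induct)
  case (step u v)
  then obtain s where "E u s" "E v s"
    using common_nbr by blast
  then show ?case
    using step.hyps(4) adj_sym unfolding in_triangle_def by blast
qed

text \<open>If \<open>b\<close> saw neither \<open>a\<close> nor \<open>c\<close>, it would be a pendant vertex on a triangle: on \<open>w a c\<close>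
  if \<open>w\<close> sees \<open>c\<close>; else, for a common neighbour \<open>s\<close> of \<open>w\<close> and \<open>a\<close> (which must see \<open>c\<close>),
  on \<open>a s c\<close> or on \<open>w s a\<close>.\<close>

lemma sees_edge_near_triangle:
  assumes "in_triangle w" "E w b" "E w a" "E a c"
  shows "E b a \<or> E b c"
proof (rule ccontr)
  assume nb: "\<not> (E b a \<or> E b c)"
  show False
  proof (cases "E w c")
    case True
    then show False using no_paw[OF assms(3) True assms(4) assms(2)] nb by blast
  next
    case False
    obtain s where s: "E w s" "E a s"
      using common_nbr[OF assms(1,3)] .
    have "E s c"
      using no_paw[OF adj_sym[OF assms(3)] s(2) s(1) assms(4)] False adj_sym by blast
    then show False
      using no_paw[OF adj_sym[OF s(2)] \<open>E s c\<close> assms(4)] no_paw[OF s(1) assms(3) adj_sym[OF s(2)] assms(2)]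
        nb adj_sym by blast
  qed
qed

lemma sees_every_edge:
  assumes "in_triangle a" "E a c" "connected_in V a b" "b \<noteq> a" "b \<noteq> c"
  shows "E b a \<or> E b c"
  using assms(3-5)
proof (induction rule: connected_in_induct)
  case (step u v)
  have "in_triangle u"
    using in_triangle_connected[OF step.hyps(1) assms(1)] .
  consider "u = a" | "u = c" | "E u a" | "E u c"
    using step.IH by blast
  then show ?case
  proof cases
    case 3
    then show ?thesis using sees_edge_near_triangle[OF \<open>in_triangle u\<close> step.hyps(4) 3 assms(2)] by blast
  next
    case 4
    then show ?thesis using sees_edge_near_triangle[OF \<open>in_triangle u\<close> step.hyps(4) 4 adj_sym[OF assms(2)]] by blast
  qed (use step.hyps(4) adj_sym in blast)+
qed simp

lemma component_with_triangle_colourable: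
  assumes "v \<in> V" "\<not> triangle_free (component_in V v)"
  obtains K where "clique K" "colourable (component_in V v) E (card K)"
proof (rule complete_multipartite_colourable)
  let ?C = "component_in V v"
  show "?C \<subseteq> V"
    using component_in_subset[OF assms(1)] .
  obtain a b c where abc: "a \<in> ?C" "E a b" "E b c" "E a c"
    using assms(2) unfolding triangle_free_def by blast
  then have "in_triangle a"
    unfolding in_triangle_def by blast
  fix x y z assume xyz: "x \<in> ?C" "y \<in> ?C" "z \<in> ?C" "\<not> E x y" "\<not> E y z"
  show "\<not> E x z"
  proof
    assume "E x z"
    have "connected_in V a x" "connected_in V a y"
      using abc(1) xyz(1,2) component_in_eq unfolding component_in_def
      by (metis connected_in_sym connected_in_trans mem_Collect_eq)+
    then have "in_triangle x" "connected_in V x y"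
      using in_triangle_connected[OF _ \<open>in_triangle a\<close>] connected_in_sym connected_in_trans by blast+
    moreover have "y \<noteq> x" "y \<noteq> z"
      using \<open>E x z\<close> xyz(4,5) by auto
    ultimately show False
      using sees_every_edge[OF _ \<open>E x z\<close>] xyz(4,5) adj_sym by blast
  qed
qed (use that in blast)

end

theorem theorem8:
  fixes p d :: nat
  assumes "p \<ge> 4" and "d \<ge> 1"
  shows "\<exists>f :: real poly. \<forall>t :: nat. t \<ge> 1 \<longrightarrow>
    (\<forall>(V :: nat set) E. simple_graph V E \<longrightarrow>
       H_free V E paw_V paw_E \<longrightarrow>
       H_free V E (T1_V p) (T1_E p) \<longrightarrow>
       \<not> contains_subgraph V E (Kdt_V d t) Kdt_E \<longrightarrow>
       real (chromatic_number V E) \<le> poly f (real t))"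
proof (intro exI[of _ "[:real p + 4, real d:]"] allI impI)
  fix t :: nat and V :: "nat set" and E
  assume "simple_graph V E" "H_free V E paw_V paw_E" "H_free V E (T1_V p) (T1_E p)"
    and no_Kdt: "\<not> contains_subgraph V E (Kdt_V d t) Kdt_E"
  then interpret T1_free_graph V E p + paw_free_graph V E
    using assms(1) by unfold_locales (auto simp: H_free_def)
  have "colourable (component_in V v) E (p + 4 + d * t)" if v: "v \<in> V" for v
  proof (cases "triangle_free (component_in V v)")
    case True
    show ?thesis
      by (rule colourable_mono[OF triangle_free_component_colourable[OF v True]]) simp
  next
    case False
    then obtain K where K: "clique K" "colourable (component_in V v) E (card K)"
      using component_with_triangle_colourable[OF v] by blast
    show ?thesis
      by (rule colourable_mono[OF K(2)]) (use clique_card_less[OF no_Kdt K(1)] in linarith)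
  qed
  then have "chromatic_number V E \<le> p + 4 + d * t"
    by (intro chromatic_number_le colourable_componentwise) blast
  then show "real (chromatic_number V E) \<le> poly [:real p + 4, real d:] (real t)"
    by (simp add: algebra_simps flip: of_nat_mult of_nat_add)
qed

end
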